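(* Let $n\ge1$ be an integer. Define the affine map $A_1:\mathbb{R}^2\to\mathbb{R}^{2n+2}$ by $(A_1x)_j=\sin\!\big(\tfrac{\pi j}{n+1}\big)x_1+\cos\!\big(\tfrac{\pi j}{n+1}\big)x_2-1$ for $j=1,\dots,2n+2$, let $G(y)=\sum_{j=1}^{2n+2}(-1)^jy_j$, and $F=G\circ\sigma\circ A_1:\mathbb{R}^2\to\mathbb{R}$. Let $K=\{x\in\mathbb{R}^2:(A_1x)_j\le0\text{ for all }j\}$ (a $(2n+2)$-gon containing the origin). Then $K$ is a flat $2$-cell of $\mathcal{C}(F)$ with $F(K)=\{0\}$, $K$ is a connected component of $F^{-1}(0)\cap\big(\text{union of flat cells of }\mathcal{C}(F)\big)$, and $$H_1\big(F_{\le0},F_{\le0}\setminus K\big)\cong\mathbb{Z}^n,\qquad H_i\big(F_{\le0},F_{\le0}\setminus K\big)=0\ \text{ for } i\ne1,$$ where $F_{\le 0}=F^{-1}((-\infty,0])$. In particular the local $H$-complexity of $K$ is $n$.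
   Context: $\sigma$ applies $\mathrm{ReLU}(t)=\max\{0,t\}$ coordinatewise. $\mathcal{C}(F)$ is the polyhedral complex of the line arrangement $\{x:(A_1x)_j=0\}$ (cells = closures of nonempty sets of constant sign vector $(\operatorname{sgn}(A_1x)_j)_j$); a cell is flat if $F$ is constant on it (all $0$-cells are flat). $H_*$ is singular homology with $\mathbb{Z}$ coefficients. For a connected component $K$ of $F^{-1}(a)\cap(\text{union of flat cells})$, its $i$th local $H$-complexity is $\operatorname{rank}H_i(F_{\le a},F_{\le a}\setminus K)$ and its total local $H$-complexity is the sum over $i$. *)

theory Defs
  imports "HOL-Analysis.Analysis" "HOL-Homology.Homology"
begin

text \<open>The affine map A_1 : R^2 -> R^(2n+2), coordinates indexed by j = 1..2n+2.\<close>
definition A1 :: "nat \<Rightarrow> real^2 \<Rightarrow> nat \<Rightarrow> real" where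
  "A1 n x j = sin (pi * real j / real (n + 1)) * x$1 + cos (pi * real j / real (n + 1)) * x$2 - 1"

definition relu :: "real \<Rightarrow> real" where
  "relu t = max 0 t"

definition Fnet :: "nat \<Rightarrow> real^2 \<Rightarrow> real" where
  "Fnet n x = (\<Sum>j=1..2*n+2. (-1)^j * relu (A1 n x j))"

text \<open>Cells of the polyhedral complex C(F): closures of nonempty sets of constant sign vector.\<close>
definition sign_region :: "nat \<Rightarrow> (nat \<Rightarrow> real) \<Rightarrow> (real^2) set" where
  "sign_region n s = {x. \<forall>j\<in>{1..2*n+2}. sgn (A1 n x j) = s j}"

definition cells :: "nat \<Rightarrow> (real^2) set set" where
  "cells n = {closure (sign_region n s) | s. sign_region n s \<noteq> {}}"

definition flat_cell :: "nat \<Rightarrow> (real^2) set \<Rightarrow> bool" where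
  "flat_cell n C \<longleftrightarrow> C \<in> cells n \<and> (\<exists>c. \<forall>x\<in>C. Fnet n x = c)"

definition flat_union :: "nat \<Rightarrow> (real^2) set" where
  "flat_union n = \<Union>{C. flat_cell n C}"

definition Z_independent :: "('a, 'b) monoid_scheme \<Rightarrow> 'a set \<Rightarrow> bool" where
  "Z_independent G S \<longleftrightarrow> S \<subseteq> carrier G \<and> finite S \<and>
     (\<forall>c :: 'a \<Rightarrow> int. finprod G (\<lambda>s. s [^]\<^bsub>G\<^esub> c s) S = \<one>\<^bsub>G\<^esub> \<longrightarrow> (\<forall>s\<in>S. c s = 0))"

definition group_rank :: "('a, 'b) monoid_scheme \<Rightarrow> nat" where
  "group_rank G = Sup {card S | S. Z_independent G S}"

definition total_local_H_complexity :: "('a::topological_space \<Rightarrow> real) \<Rightarrow> real \<Rightarrow> 'a set \<Rightarrow> nat" where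
  "total_local_H_complexity F a K =
     (let X = {x. F x \<le> a};
          r = (\<lambda>i. group_rank (relative_homology_group i (subtopology euclidean X) (X - K)))
      in \<Sum>i\<in>{i. r i \<noteq> 0}. r i)"

end

theory Submission
  imports Defs
begin

text \<open>Near the polygon \<open>K\<close> two facets can only be active together if they are adjacent: a point
  beyond two non-adjacent facet lines lies strictly beyond a facet line between them. Hence on a
  small neighbourhood \<open>N\<close> of \<open>K\<close> the sublevel set \<open>F \<le> 0\<close> consists of \<open>K\<close> and \<open>n + 1\<close>
  disjoint convex wedges, one for each odd facet, on which that facet dominates its two neighbours.
  Scaling towards the origin preserves \<open>N \<inter> {F \<le> 0}\<close>, so it is contractible, and excision gives
  \<open>H\<^sub>p(F\<^sub>\<le>\<^sub>0, F\<^sub>\<le>\<^sub>0 - K) \<cong> H\<^sub>p(N, N - K) \<cong> H\<^sub>p\<^sub>-\<^sub>1\<close> of \<open>n\<close> of the wedges, which is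
  \<open>\<int>\<^sup>n\<close> for \<open>p = 1\<close> and trivial otherwise. The same local picture shows that no other flat cell
  enters \<open>N\<close> outside \<open>K\<close>: on a cell meeting it, \<open>F\<close> is affine and not constant.\<close>

section \<open>Rank of abelian groups\<close>

lemma comm_group_hom_finprod:
  assumes G: "comm_group G" and H: "comm_group H" and h: "h \<in> hom G H"
    and "finite S" and "f \<in> S \<rightarrow> carrier G"
  shows "h (finprod G f S) = finprod H (\<lambda>s. h (f s)) S"
proof -
  interpret G: comm_group G by fact
  interpret H: comm_group H by fact
  interpret group_hom G H h
    using h by (simp add: group_hom_def group_hom_axioms_def G.group_axioms H.group_axioms)
  show ?thesis
    using \<open>finite S\<close> \<open>f \<in> S \<rightarrow> carrier G\<close>
  proof (induction S rule: finite_induct)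
    case (insert a F)
    then have "f a \<in> carrier G" "f \<in> F \<rightarrow> carrier G" by auto
    then show ?case using insert by (simp add: Pi_def)
  qed simp
qed

lemma Z_independent_iso_image:
  assumes G: "comm_group G" and H: "comm_group H" and h: "h \<in> iso G H"
    and S: "Z_independent G S"
  shows "Z_independent H (h ` S)" and "card (h ` S) = card S"
proof -
  interpret G: comm_group G by fact
  interpret H: comm_group H by fact
  have hom: "h \<in> hom G H" using h by (simp add: iso_def)
  interpret group_hom G H h
    using hom by (simp add: group_hom_def group_hom_axioms_def G.group_axioms H.group_axioms)
  have SG: "S \<subseteq> carrier G" and fin: "finite S"
    and indep: "\<And>c. finprod G (\<lambda>s. s [^]\<^bsub>G\<^esub> c s) S = \<one>\<^bsub>G\<^esub> \<Longrightarrow> \<forall>s\<in>S. c s = (0::int)"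
    using S by (auto simp: Z_independent_def)
  have inj: "inj_on h (carrier G)" using h by (simp add: iso_def bij_betw_def)
  then have injS: "inj_on h S" using SG inj_on_subset by blast
  then show "card (h ` S) = card S" by (rule card_image)
  show "Z_independent H (h ` S)"
    unfolding Z_independent_def
  proof (intro conjI allI impI ballI)
    show "h ` S \<subseteq> carrier H" "finite (h ` S)" using SG fin by auto
    fix c :: "_ \<Rightarrow> int" and t
    assume rel: "finprod H (\<lambda>s. s [^]\<^bsub>H\<^esub> c s) (h ` S) = \<one>\<^bsub>H\<^esub>" and t: "t \<in> h ` S"
    define g where "g = finprod G (\<lambda>s. s [^]\<^bsub>G\<^esub> c (h s)) S"
    have "h g = finprod H (\<lambda>s. h s [^]\<^bsub>H\<^esub> c (h s)) S"
      unfolding g_def using SG fin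
      by (subst comm_group_hom_finprod[OF G H hom]) (auto intro!: H.finprod_cong' simp: hom_int_pow)
    also have "\<dots> = \<one>\<^bsub>H\<^esub>"
      using rel SG injS by (subst (asm) H.finprod_reindex) auto
    moreover have "g \<in> carrier G"
      unfolding g_def by (intro G.finprod_closed) (use SG in auto)
    ultimately have "g = \<one>\<^bsub>G\<^esub>"
      using inj_onD[OF inj, of g "\<one>\<^bsub>G\<^esub>"] by simp
    then show "c t = 0" using indep[of "c \<circ> h"] t by (auto simp: g_def)
  qed
qed

lemma card_Z_independent_subset_iso:
  assumes G: "comm_group G" and H: "comm_group H" and "G \<cong> H"
  shows "{card S | S. Z_independent G S} \<subseteq> {card S | S. Z_independent H S}"
proof
  obtain h where h: "h \<in> iso G H" using \<open>G \<cong> H\<close> by (auto simp: is_iso_def)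
  fix k assume "k \<in> {card S | S. Z_independent G S}"
  then obtain S where "k = card S" "Z_independent G S" by blast
  then have "Z_independent H (h ` S)" "k = card (h ` S)"
    using Z_independent_iso_image[OF G H h] by auto
  then show "k \<in> {card S | S. Z_independent H S}" by blast
qed

lemma group_rank_iso:
  assumes G: "comm_group G" and H: "comm_group H" and "G \<cong> H"
  shows "group_rank G = group_rank H"
proof -
  have "H \<cong> G" using \<open>G \<cong> H\<close> G by (simp add: comm_group.axioms(2) group.iso_sym)
  then show ?thesis
    unfolding group_rank_def
    using card_Z_independent_subset_iso[OF G H \<open>G \<cong> H\<close>] card_Z_independent_subset_iso[OF H G]
    by (simp add: subset_antisym)
qed

lemma Z_independent_trivial_group:
  assumes "trivial_group G" and "Z_independent G S"
  shows "S = {}"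
proof (rule ccontr)
  assume "S \<noteq> {}"
  interpret group G using assms(1) by (simp add: trivial_group_def)
  interpret comm_group G
    by (rule group_comm_groupI) (use assms(1) in \<open>auto simp: trivial_group_def\<close>)
  have "S \<subseteq> {\<one>\<^bsub>G\<^esub>}" using assms by (auto simp: Z_independent_def trivial_group_def)
  then have S: "S = {\<one>\<^bsub>G\<^esub>}" using \<open>S \<noteq> {}\<close> by auto
  have indep: "finprod G (\<lambda>s. s [^]\<^bsub>G\<^esub> c s) S = \<one>\<^bsub>G\<^esub> \<Longrightarrow> \<forall>s\<in>S. c s = 0" for c :: "_ \<Rightarrow> int"
    using assms(2) by (simp add: Z_independent_def)
  have "finprod G (\<lambda>s. s [^]\<^bsub>G\<^esub> (\<lambda>_. 1::int) s) S = \<one>\<^bsub>G\<^esub>"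
    unfolding S by (simp add: finprod_singleton_swap)
  from indep[OF this] show False using S by simp
qed

lemma group_rank_trivial: "trivial_group G \<Longrightarrow> group_rank G = 0"
proof -
  assume "trivial_group G"
  then have "Z_independent G S \<longleftrightarrow> S = {}" for S
    using Z_independent_trivial_group by (auto simp: Z_independent_def)
  then have "{card S | S. Z_independent G S} = {0}" by auto
  then show ?thesis by (simp add: group_rank_def)
qed

text \<open>By fraction-free elimination of the last coordinate.\<close>

lemma int_vectors_linearly_dependent:
  fixes v :: "'a \<Rightarrow> nat \<Rightarrow> int"
  assumes "finite S" "card S > n"
  shows "\<exists>c. (\<exists>s\<in>S. c s \<noteq> 0) \<and> (\<forall>i<n. (\<Sum>s\<in>S. c s * v s i) = 0)"
  using assms
proof (induction n arbitrary: S v)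
  case 0
  then show ?case by (intro exI[of _ "\<lambda>_. 1"]) (auto simp: card_gt_0_iff)
next
  case (Suc n)
  show ?case
  proof (cases "\<forall>s\<in>S. v s n = 0")
    case True
    obtain c where "\<exists>s\<in>S. c s \<noteq> 0" "\<forall>i<n. (\<Sum>s\<in>S. c s * v s i) = 0"
      using Suc.IH[of S v] Suc.prems by auto
    then show ?thesis using True by (auto simp: less_Suc_eq)
  next
    case False
    then obtain s0 where s0: "s0 \<in> S" and a: "v s0 n \<noteq> 0" by auto
    define S' where "S' = S - {s0}"
    define v' where "v' = (\<lambda>s i. v s0 n * v s i - v s n * v s0 i)"
    have "finite S'" "card S' > n" using Suc.prems s0 by (auto simp: S'_def)
    then obtain c' where c': "\<exists>s\<in>S'. c' s \<noteq> 0" "\<forall>i<n. (\<Sum>s\<in>S'. c' s * v' s i) = 0"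
      using Suc.IH by blast
    define c where "c = (\<lambda>s. if s = s0 then - (\<Sum>t\<in>S'. c' t * v t n) else v s0 n * c' s)"
    have eliminated: "(\<Sum>s\<in>S. c s * v s i) = (\<Sum>s\<in>S'. c' s * v' s i)" for i
    proof -
      have "(\<Sum>s\<in>S. c s * v s i) = c s0 * v s0 i + (\<Sum>s\<in>S'. c s * v s i)"
        using Suc.prems s0 by (simp add: S'_def sum.remove)
      also have "c s0 * v s0 i = - (\<Sum>t\<in>S'. c' t * v t n * v s0 i)"
        by (simp add: c_def sum_distrib_right)
      also have "(\<Sum>s\<in>S'. c s * v s i) = (\<Sum>s\<in>S'. v s0 n * c' s * v s i)"
        by (rule sum.cong) (auto simp: c_def S'_def)
      also have "- (\<Sum>t\<in>S'. c' t * v t n * v s0 i) + \<dots> = (\<Sum>s\<in>S'. c' s * v' s i)"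
        by (simp add: v'_def algebra_simps sum_subtractf sum_distrib_left)
      finally show ?thesis .
    qed
    show ?thesis
    proof (intro exI conjI)
      show "\<exists>s\<in>S. c s \<noteq> 0" using c' a by (auto simp: c_def S'_def)
      show "\<forall>i<Suc n. (\<Sum>s\<in>S. c s * v s i) = 0"
        using c'(2) by (auto simp: less_Suc_eq eliminated v'_def)
    qed
  qed
qed

lemma comm_group_sum_integer_group: "comm_group (sum_group I (\<lambda>_. integer_group))"
  by (rule group.group_comm_groupI) (auto simp: add.commute)

lemma finprod_integer_group: "finite S \<Longrightarrow> finprod integer_group f S = (\<Sum>s\<in>S. f s)"
proof (induction S rule: finite_induct)
  case empty
  then show ?case by (simp add: comm_monoid.finprod_empty[OF comm_group.axioms(1)[OF abelian_integer_group]])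
next
  case (insert a F)
  then show ?case by (simp add: comm_monoid.finprod_insert[OF comm_group.axioms(1)[OF abelian_integer_group]])
qed

lemma finprod_sum_integer_group_apply:
  assumes "finite S" "S \<subseteq> carrier (sum_group I (\<lambda>_. integer_group))" "i \<in> I"
  shows "finprod (sum_group I (\<lambda>_. integer_group)) (\<lambda>s. s [^]\<^bsub>sum_group I (\<lambda>_. integer_group)\<^esub> c s) S i
    = (\<Sum>s\<in>S. c s * s i)"
proof -
  let ?Z = "sum_group I (\<lambda>_. integer_group)"
  interpret comm_group ?Z by (rule comm_group_sum_integer_group)
  have eval: "(\<lambda>x. x i) \<in> hom ?Z integer_group" using assms(3) by (auto intro!: homI)
  have "finprod ?Z (\<lambda>s. s [^]\<^bsub>?Z\<^esub> c s) S i = finprod integer_group (\<lambda>s. (s [^]\<^bsub>?Z\<^esub> c s) i) S"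
    using assms
    by (intro comm_group_hom_finprod[OF comm_group_sum_integer_group abelian_integer_group eval]) auto
  also have "\<dots> = (\<Sum>s\<in>S. (s [^]\<^bsub>?Z\<^esub> c s) i)"
    using assms by (simp add: finprod_integer_group)
  also have "\<dots> = (\<Sum>s\<in>S. c s * s i)"
    using assms by (intro sum.cong) (auto simp: hom_int_pow[OF eval])
  finally show ?thesis .
qed

lemma card_Z_independent_sum_integer_group:
  assumes "Z_independent (sum_group {..<n} (\<lambda>_. integer_group)) S"
  shows "card S \<le> n"
proof (rule ccontr)
  let ?Z = "sum_group {..<n} (\<lambda>_. integer_group)"
  interpret comm_group ?Z by (rule comm_group_sum_integer_group)
  assume "\<not> card S \<le> n"
  have SZ: "S \<subseteq> carrier ?Z" and fin: "finite S"
    and indep: "\<And>c. finprod ?Z (\<lambda>s. s [^]\<^bsub>?Z\<^esub> c s) S = \<one>\<^bsub>?Z\<^esub> \<Longrightarrow> \<forall>s\<in>S. c s = (0::int)"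
    using assms by (auto simp: Z_independent_def)
  obtain c where c: "\<exists>s\<in>S. c s \<noteq> 0" "\<forall>i<n. (\<Sum>s\<in>S. c s * s i) = 0"
    using int_vectors_linearly_dependent[OF fin, of n "\<lambda>s. s"] \<open>\<not> card S \<le> n\<close> by auto
  have "finprod ?Z (\<lambda>s. s [^]\<^bsub>?Z\<^esub> c s) S \<in> carrier ?Z"
    using SZ by (intro finprod_closed) auto
  then have "finprod ?Z (\<lambda>s. s [^]\<^bsub>?Z\<^esub> c s) S = \<one>\<^bsub>?Z\<^esub>"
    using finprod_sum_integer_group_apply[OF fin SZ] c(2)
    by (auto simp: carrier_sum_group PiE_def extensional_def)
  then show False using indep c(1) by auto
qed

lemma Z_independent_unit_vectors:
  fixes n :: nat
  defines "e \<equiv> \<lambda>k. \<lambda>i\<in>{..<n}. if i = k then 1 else (0::int)"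
  shows "Z_independent (sum_group {..<n} (\<lambda>_. integer_group)) (e ` {..<n})"
    and "card (e ` {..<n}) = n"
proof -
  let ?Z = "sum_group {..<n} (\<lambda>_. integer_group)"
  have inj_e: "inj_on e {..<n}"
  proof (rule inj_onI)
    fix k l assume "k \<in> {..<n}" "l \<in> {..<n}" "e k = e l"
    then have "e k k = e l k" by simp
    then show "k = l" using \<open>k \<in> {..<n}\<close> by (auto simp: e_def split: if_splits)
  qed
  then show "card (e ` {..<n}) = n" by (simp add: card_image)
  have E: "e ` {..<n} \<subseteq> carrier ?Z" by (auto simp: carrier_sum_group PiE_def e_def)
  show "Z_independent ?Z (e ` {..<n})"
    unfolding Z_independent_def
  proof (intro conjI allI impI ballI E)
    fix c :: "_ \<Rightarrow> int" and t
    assume rel: "finprod ?Z (\<lambda>s. s [^]\<^bsub>?Z\<^esub> c s) (e ` {..<n}) = \<one>\<^bsub>?Z\<^esub>" and "t \<in> e ` {..<n}"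
    then obtain k where k: "k < n" "t = e k" by auto
    have "0 = (\<Sum>s\<in>e ` {..<n}. c s * s k)"
      using rel finprod_sum_integer_group_apply[OF _ E, of k c] k by simp
    also have "\<dots> = (\<Sum>j<n. c (e j) * e j k)"
      using inj_e by (simp add: sum.reindex)
    also have "\<dots> = (\<Sum>j<n. if j = k then c (e k) else 0)"
      by (rule sum.cong) (auto simp: e_def k)
    also have "\<dots> = c t" using k by simp
    finally show "c t = 0" by simp
  qed simp
qed

lemma group_rank_sum_integer_group: "group_rank (sum_group {..<n} (\<lambda>_. integer_group)) = n"
proof -
  obtain U where "Z_independent (sum_group {..<n} (\<lambda>_. integer_group)) U" "card U = n"
    using Z_independent_unit_vectors[of n] by blast
  then have "n \<in> {card S | S. Z_independent (sum_group {..<n} (\<lambda>_. integer_group)) S}"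
    by (auto intro!: exI[of _ U])
  then show ?thesis
    unfolding group_rank_def by (rule cSup_eq_maximum) (use card_Z_independent_sum_integer_group in auto)
qed

section \<open>Homological tools\<close>

lemma top_of_set_subtopology: "T \<subseteq> S \<Longrightarrow> subtopology (top_of_set S) T = top_of_set T"
  by (simp add: subtopology_subtopology Int_absorb1)

lemma relative_homology_excision_nbhd:
  fixes S K V :: "'a::topological_space set"
  assumes "closed K" "open V" "K \<subseteq> V"
  shows "relative_homology_group p (top_of_set (S \<inter> V)) (S \<inter> V - K)
    \<cong> relative_homology_group p (top_of_set S) (S - K)"
proof -
  let ?X = "top_of_set S"
  have "?X closure_of (S - V) = S - V"
    using assms(2) by (intro closure_of_closedin) (simp add: closedin_closed_Int Diff_eq closed_Compl)
  moreover have "?X interior_of (S - K) = S - K"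
    using assms(1) by (intro interior_of_openin) (simp add: openin_open_Int Diff_eq open_Compl)
  ultimately have "hom_induced p (subtopology ?X (S - (S - V))) ((S - K) - (S - V)) (subtopology ?X S) (S - K) id
      \<in> iso (relative_homology_group p (subtopology ?X (S - (S - V))) ((S - K) - (S - V)))
            (relative_homology_group p (subtopology ?X S) (S - K))"
    using assms(3) by (intro homology_excision_axiom) auto
  moreover have "S - (S - V) = S \<inter> V" "(S - K) - (S - V) = S \<inter> V - K" using assms(3) by auto
  ultimately show ?thesis by (auto simp: is_iso_def top_of_set_subtopology)
qed

lemma homology_excision_clopen:
  fixes Q T :: "'a::topological_space set"
  assumes "openin (top_of_set T) Q" "closedin (top_of_set T) Q"
  shows "homology_group p (top_of_set (T - Q)) \<cong> relative_homology_group p (top_of_set T) Q"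
proof -
  let ?X = "top_of_set T"
  have QT: "Q \<subseteq> T" using openin_imp_subset[OF assms(1)] by simp
  have "hom_induced p (subtopology ?X (T - Q)) (Q - Q) (subtopology ?X T) Q id
      \<in> iso (relative_homology_group p (subtopology ?X (T - Q)) (Q - Q))
            (relative_homology_group p (subtopology ?X T) Q)"
    using assms QT by (intro homology_excision_axiom) (auto simp: closure_of_closedin interior_of_openin)
  then show ?thesis by (auto simp: is_iso_def top_of_set_subtopology)
qed

text \<open>Relative to a contractible space, the homology of a pair is the reduced homology of the
  subspace; a contractible clopen piece of the subspace then plays the role of a base point.\<close>

lemma relative_homology_contractible_clopen:
  fixes N T Q :: "'a::real_normed_vector set"
  assumes "contractible N" "T \<subseteq> N" "contractible Q" "Q \<noteq> {}"
    and "openin (top_of_set T) Q" "closedin (top_of_set T) Q"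
  shows "relative_homology_group p (top_of_set N) T \<cong> homology_group (p - 1) (top_of_set (T - Q))"
proof -
  have QT: "Q \<subseteq> T" using openin_imp_subset[OF assms(5)] by simp
  have "relative_homology_group p (top_of_set N) T \<cong> reduced_homology_group (p - 1) (top_of_set T)"
    using isomorphic_group_relative_homology_of_contractible[of "top_of_set N" T p] assms QT
    by (auto simp: top_of_set_subtopology)
  also have "\<dots> \<cong> relative_homology_group (p - 1) (top_of_set T) Q"
    using isomorphic_reduced_homology_by_contractible[of "top_of_set T" Q "p - 1"] assms QT
    by (auto simp: top_of_set_subtopology)
  also have "\<dots> \<cong> homology_group (p - 1) (top_of_set (T - Q))"
    using homology_excision_clopen[OF assms(5,6)] by (simp add: group.iso_sym)
  finally show ?thesis .
qed

lemma homology_disjoint_open_Union: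
  fixes \<U> :: "'a::topological_space set set"
  assumes "pairwise disjnt \<U>" "\<And>S. S \<in> \<U> \<Longrightarrow> openin (top_of_set (\<Union>\<U>)) S"
  shows "homology_group p (top_of_set (\<Union>\<U>)) \<cong> sum_group \<U> (\<lambda>S. homology_group p (top_of_set S))"
proof -
  have "sum_group \<U> (\<lambda>S. homology_group p (subtopology (top_of_set (\<Union>\<U>)) S))
      \<cong> homology_group p (top_of_set (\<Union>\<U>))"
    using homology_additivity_axiom[of \<U> "top_of_set (\<Union>\<U>)" p] assms by (auto intro: is_isoI)
  moreover have "sum_group \<U> (\<lambda>S. homology_group p (subtopology (top_of_set (\<Union>\<U>)) S))
      \<cong> sum_group \<U> (\<lambda>S. homology_group p (top_of_set S))"
    by (intro iso_sum_groupI) (auto simp: top_of_set_subtopology Union_upper)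
  moreover have "group (sum_group \<U> (\<lambda>S. homology_group p (subtopology (top_of_set (\<Union>\<U>)) S)))"
    by simp
  ultimately show ?thesis by (meson group.iso_sym iso_trans)
qed

lemma homology_group_convex:
  fixes S :: "'a::real_normed_vector set"
  assumes "convex S" "S \<noteq> {}"
  shows "homology_group 0 (top_of_set S) \<cong> integer_group"
    and "p \<noteq> 0 \<Longrightarrow> trivial_group (homology_group p (top_of_set S))"
proof -
  show "homology_group 0 (top_of_set S) \<cong> integer_group"
    using assms convex_imp_path_connected by (intro isomorphic_integer_zeroth_homology_group) auto
  assume "p \<noteq> 0"
  then show "trivial_group (homology_group p (top_of_set S))"
    using trivial_reduced_homology_group_contractible_space[of "top_of_set S" p] assms
    by (simp add: convex_imp_contractible un_reduced_homology_group)
qed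

lemma trivial_sum_group:
  assumes "\<And>i. i \<in> I \<Longrightarrow> trivial_group (G i)"
  shows "trivial_group (sum_group I G)"
proof -
  have grp: "\<And>i. i \<in> I \<Longrightarrow> group (G i)" using assms by (simp add: trivial_group_def)
  have "carrier (sum_group I G) \<subseteq> {\<one>\<^bsub>sum_group I G\<^esub>}"
    using assms by (force simp: carrier_sum_group[OF grp] PiE_def extensional_def trivial_group_def)
  then show ?thesis using group.trivial_group_subset[of "sum_group I G"] grp by simp
qed

lemma sum_integer_group_card:
  assumes "finite I"
  shows "sum_group I (\<lambda>_. integer_group) \<cong> sum_group {..<card I} (\<lambda>_. integer_group)"
proof -
  have "sum_group I (\<lambda>_. integer_group) \<cong> free_Abelian_group I"
    by (rule isomorphic_sum_integer_group)
  also have "\<dots> \<cong> free_Abelian_group {..<card I}"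
    using assms by (simp add: isomorphic_free_Abelian_groups eqpoll_iff_card)
  also have "\<dots> \<cong> sum_group {..<card I} (\<lambda>_. integer_group)"
    by (rule group.iso_sym) (simp_all add: isomorphic_sum_integer_group)
  finally show ?thesis .
qed

section \<open>Geometry of the line arrangement\<close>

definition facet_angle :: "nat \<Rightarrow> nat \<Rightarrow> real" where
  "facet_angle n j = pi * real j / real (n + 1)"

definition dir_form :: "real \<Rightarrow> real^2 \<Rightarrow> real" where
  "dir_form \<phi> x = sin \<phi> * x$1 + cos \<phi> * x$2"

lemma A1_dir_form: "A1 n x j = dir_form (facet_angle n j) x - 1"
  by (simp add: A1_def dir_form_def facet_angle_def)

lemma A1_periodic: "A1 n x (j + 2 * (n + 1)) = A1 n x j"
proof -
  have "facet_angle n (j + 2 * (n + 1)) = facet_angle n j + 2 * pi"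
    by (simp add: facet_angle_def field_simps)
  then show ?thesis by (simp add: A1_dir_form dir_form_def)
qed

lemma A1_antipodal: "A1 n x (j + (n + 1)) = - A1 n x j - 2"
proof -
  have "facet_angle n (j + (n + 1)) = facet_angle n j + pi"
    by (simp add: facet_angle_def field_simps)
  then show ?thesis by (simp add: A1_dir_form dir_form_def)
qed

lemma sin_add_lt:
  assumes "0 < a" "0 < b" "a + b < pi"
  shows "sin (a + b) < sin a + sin b"
proof -
  have "sin a > 0" "sin b > 0" using assms by (auto intro!: sin_gt_zero)
  moreover have "cos a < 1" "cos b < 1"
    using assms cos_monotone_0_pi[of 0 a] cos_monotone_0_pi[of 0 b] by auto
  ultimately show ?thesis by (simp add: sin_add mult_less_cancel_left1 mult_less_cancel_right1 add_strict_mono)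
qed

text \<open>The margin comes from the identity
  \<open>sin (a + b) * dir_form \<phi> x = sin b * dir_form (\<phi> - a) x + sin a * dir_form (\<phi> + b) x\<close>
  and \<open>sin (a + b) < sin a + sin b\<close>.\<close>

lemma dir_form_between:
  assumes "0 < a" "0 < b" "a + b < pi"
  shows "\<exists>e>0. \<forall>x. dir_form (\<phi> - a) x \<ge> 1 \<longrightarrow> dir_form (\<phi> + b) x \<ge> 1 \<longrightarrow> dir_form \<phi> x \<ge> 1 + e"
proof -
  have s: "sin a > 0" "sin b > 0" "sin (a + b) > 0" using assms by (auto intro!: sin_gt_zero)
  define e where "e = (sin a + sin b) / sin (a + b) - 1"
  have "e > 0" using sin_add_lt[OF assms] s by (simp add: e_def field_simps)
  moreover have "dir_form \<phi> x \<ge> 1 + e"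
    if "dir_form (\<phi> - a) x \<ge> 1" "dir_form (\<phi> + b) x \<ge> 1" for x
  proof -
    have "sin (a + b) * dir_form \<phi> x = sin b * dir_form (\<phi> - a) x + sin a * dir_form (\<phi> + b) x"
      by (simp add: dir_form_def sin_add cos_add sin_diff cos_diff algebra_simps)
    also have "\<dots> \<ge> sin b + sin a" using that s by (intro add_mono) (auto simp: mult_le_cancel_left1)
    finally show ?thesis using s by (simp add: e_def field_simps)
  qed
  ultimately show ?thesis by blast
qed

lemma A1_between:
  assumes "2 \<le> d" "d < n + 1"
  shows "\<exists>e>0. \<forall>x. A1 n x i \<ge> 0 \<longrightarrow> A1 n x (i + d) \<ge> 0 \<longrightarrow> A1 n x (i + 1) \<ge> e"
proof -
  define m where "m = real (n + 1)"
  have m: "m > 0" "real d < m" using assms by (auto simp: m_def)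
  have fa: "facet_angle n j = pi * real j / m" for j by (simp add: facet_angle_def m_def)
  have ab: "0 < pi / m" "0 < pi * (real d - 1) / m" "pi / m + pi * (real d - 1) / m < pi"
    using assms m by (auto simp: field_simps)
  obtain e where "e > 0"
    and e: "\<And>x. dir_form (facet_angle n (i + 1) - pi / m) x \<ge> 1
      \<Longrightarrow> dir_form (facet_angle n (i + 1) + pi * (real d - 1) / m) x \<ge> 1
      \<Longrightarrow> dir_form (facet_angle n (i + 1)) x \<ge> 1 + e"
    using dir_form_between[OF ab, of "facet_angle n (i + 1)"] by blast
  have "facet_angle n (i + 1) - pi / m = facet_angle n i"
    "facet_angle n (i + 1) + pi * (real d - 1) / m = facet_angle n (i + d)"
    using m by (simp_all add: fa field_simps)
  then show ?thesis using \<open>e > 0\<close> e by (fastforce simp: A1_dir_form)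
qed

definition cyc_next :: "nat \<Rightarrow> nat \<Rightarrow> nat" where
  "cyc_next n j = (if j = 2 * n + 2 then 1 else j + 1)"

definition cyc_prev :: "nat \<Rightarrow> nat \<Rightarrow> nat" where
  "cyc_prev n j = (if j = 1 then 2 * n + 2 else j - 1)"

definition cyc_adj :: "nat \<Rightarrow> nat \<Rightarrow> nat \<Rightarrow> bool" where
  "cyc_adj n i k \<longleftrightarrow> k = cyc_next n i \<or> i = cyc_next n k"

lemma cyc_next_in: "j \<in> {1..2*n+2} \<Longrightarrow> cyc_next n j \<in> {1..2*n+2}"
  by (auto simp: cyc_next_def)

lemma cyc_prev_in: "j \<in> {1..2*n+2} \<Longrightarrow> cyc_prev n j \<in> {1..2*n+2}"
  by (auto simp: cyc_prev_def)

lemma cyc_adj_sym: "cyc_adj n i k \<longleftrightarrow> cyc_adj n k i"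
  by (auto simp: cyc_adj_def)

lemma cyc_adj_iff:
  "j \<in> {1..2*n+2} \<Longrightarrow> i \<in> {1..2*n+2} \<Longrightarrow> cyc_adj n j i \<longleftrightarrow> i = cyc_next n j \<or> i = cyc_prev n j"
  by (auto simp: cyc_adj_def cyc_next_def cyc_prev_def)

lemma cyc_neighbours_distinct:
  assumes "n \<ge> 1" "j \<in> {1..2*n+2}"
  shows "cyc_next n j \<noteq> j" "cyc_prev n j \<noteq> j" "cyc_next n j \<noteq> cyc_prev n j"
    and "\<not> cyc_adj n (cyc_next n j) (cyc_prev n j)"
  using assms by (auto simp: cyc_adj_def cyc_next_def cyc_prev_def)

lemma odd_cyc_neighbours:
  "j \<in> {1..2*n+2} \<Longrightarrow> odd (cyc_next n j) \<longleftrightarrow> even j"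
  "j \<in> {1..2*n+2} \<Longrightarrow> odd (cyc_prev n j) \<longleftrightarrow> even j"
  by (auto simp: cyc_next_def cyc_prev_def)

lemma cyc_adj_parity:
  "i \<in> {1..2*n+2} \<Longrightarrow> k \<in> {1..2*n+2} \<Longrightarrow> cyc_adj n i k \<Longrightarrow> odd i \<longleftrightarrow> even k"
  by (auto simp: cyc_adj_def cyc_next_def split: if_splits)

lemma A1_cyc_next: "A1 n x (cyc_next n j) = A1 n x (j + 1)"
  using A1_periodic[of n x 1] by (simp add: cyc_next_def)

text \<open>Of the two arcs of normal directions joining two non-adjacent facets, one has opening at
  most \<open>\<pi>\<close>. Below \<open>\<pi>\<close> the facet next to one end of that arc gives the margin; at exactly
  \<open>\<pi>\<close> the two closed outer half-planes are disjoint.\<close>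

lemma nonadjacent_facets_margin_less:
  assumes ik: "i \<in> {1..2*n+2}" "k \<in> {1..2*n+2}" "i < k" "\<not> cyc_adj n i k"
  shows "\<exists>l\<in>{1..2*n+2}. \<exists>e>0. \<forall>x. A1 n x i \<ge> 0 \<longrightarrow> A1 n x k \<ge> 0 \<longrightarrow> A1 n x l \<ge> e"
proof -
  define d where "d = k - i"
  have k: "k = i + d" using ik by (simp add: d_def)
  have "d \<ge> 2" using ik by (auto simp: k cyc_adj_def cyc_next_def)
  have "d \<noteq> 2 * n + 1"
  proof
    assume "d = 2 * n + 1"
    then have "i = 1" "k = 2 * n + 2" using ik by (auto simp: k)
    then show False using ik(4) by (simp add: cyc_adj_def cyc_next_def)
  qed
  then have "d \<le> 2 * n" using ik by (simp add: k)
  then consider "d < n + 1" | "d = n + 1" | "d > n + 1" by linarith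
  then show ?thesis
  proof cases
    case 1
    then obtain e where "e > 0" "\<forall>x. A1 n x i \<ge> 0 \<longrightarrow> A1 n x k \<ge> 0 \<longrightarrow> A1 n x (i + 1) \<ge> e"
      using A1_between[OF \<open>d \<ge> 2\<close>, of n i] by (auto simp: k)
    moreover have "i + 1 \<in> {1..2*n+2}" using ik by simp
    ultimately show ?thesis by blast
  next
    case 2
    then have "A1 n x k = - A1 n x i - 2" for x using A1_antipodal[of n x i] by (simp add: k)
    then show ?thesis using ik by (intro bexI[of _ i] exI[of _ 1]) auto
  next
    case 3
    have "2 \<le> 2 * (n + 1) - d" "2 * (n + 1) - d < n + 1" using 3 \<open>d \<le> 2 * n\<close> by auto
    then obtain e where "e > 0"
      and e: "\<forall>x. A1 n x k \<ge> 0 \<longrightarrow> A1 n x (k + (2 * (n + 1) - d)) \<ge> 0 \<longrightarrow> A1 n x (k + 1) \<ge> e"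
      using A1_between by blast
    moreover have "A1 n x (k + (2 * (n + 1) - d)) = A1 n x i" for x
      using 3 \<open>d \<le> 2 * n\<close> A1_periodic[of n x i] by (simp add: k)
    ultimately have "\<forall>x. A1 n x i \<ge> 0 \<longrightarrow> A1 n x k \<ge> 0 \<longrightarrow> A1 n x (cyc_next n k) \<ge> e"
      by (simp add: A1_cyc_next)
    then show ?thesis using cyc_next_in[OF ik(2)] \<open>e > 0\<close> by blast
  qed
qed

lemma nonadjacent_facets_margin:
  assumes "i \<in> {1..2*n+2}" "k \<in> {1..2*n+2}" "i \<noteq> k" "\<not> cyc_adj n i k"
  shows "\<exists>l\<in>{1..2*n+2}. \<exists>e>0. \<forall>x. A1 n x i \<ge> 0 \<longrightarrow> A1 n x k \<ge> 0 \<longrightarrow> A1 n x l \<ge> e"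
proof (cases "i < k")
  case True
  then show ?thesis using nonadjacent_facets_margin_less assms by blast
next
  case False
  then have "k < i" using assms(3) by simp
  then show ?thesis using nonadjacent_facets_margin_less[of k n i] assms cyc_adj_sym by blast
qed

definition nbhd :: "nat \<Rightarrow> real \<Rightarrow> (real^2) set" where
  "nbhd n \<delta> = {x. \<forall>j\<in>{1..2*n+2}. A1 n x j < \<delta>}"

definition separates_nonadjacent :: "nat \<Rightarrow> real \<Rightarrow> bool" where
  "separates_nonadjacent n \<delta> \<longleftrightarrow> (\<forall>x\<in>nbhd n \<delta>. \<forall>i\<in>{1..2*n+2}. \<forall>k\<in>{1..2*n+2}.
     i \<noteq> k \<and> \<not> cyc_adj n i k \<longrightarrow> A1 n x i < 0 \<or> A1 n x k < 0)"

lemma separates_nonadjacent_exists: "\<exists>\<delta>>0. separates_nonadjacent n \<delta>"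
proof -
  define P where "P = {(i, k). i \<in> {1..2*n+2} \<and> k \<in> {1..2*n+2} \<and> i \<noteq> k \<and> \<not> cyc_adj n i k}"
  have "finite P" unfolding P_def
    by (rule finite_subset[of _ "{1..2*n+2} \<times> {1..2*n+2}"]) auto
  moreover have "\<forall>\<^sub>F \<delta> in at_right 0. \<forall>x\<in>nbhd n \<delta>. A1 n x i < 0 \<or> A1 n x k < 0"
    if "(i, k) \<in> P" for i k
  proof -
    have "i \<in> {1..2*n+2}" "k \<in> {1..2*n+2}" "i \<noteq> k" "\<not> cyc_adj n i k"
      using that by (auto simp: P_def)
    then obtain l e where l: "l \<in> {1..2*n+2}" and "e > 0"
      and e: "\<And>x. A1 n x i \<ge> 0 \<Longrightarrow> A1 n x k \<ge> 0 \<Longrightarrow> A1 n x l \<ge> e"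
      using nonadjacent_facets_margin by blast
    have "A1 n x i < 0 \<or> A1 n x k < 0" if "\<delta> < e" "x \<in> nbhd n \<delta>" for \<delta> x
    proof -
      have "A1 n x l < \<delta>" using that(2) l by (simp add: nbhd_def)
      then have "A1 n x l < e" using that(1) by linarith
      then show ?thesis using e[of x] by linarith
    qed
    then show ?thesis
      unfolding eventually_at_right_field using \<open>e > 0\<close> by auto
  qed
  ultimately have "\<forall>\<^sub>F \<delta> in at_right 0. \<forall>(i, k)\<in>P. \<forall>x\<in>nbhd n \<delta>. A1 n x i < 0 \<or> A1 n x k < 0"
    by (intro eventually_ball_finite) auto
  then obtain b where "b > 0" and b: "\<And>\<delta>. 0 < \<delta> \<Longrightarrow> \<delta> < b \<Longrightarrow> \<forall>(i, k)\<in>P. \<forall>x\<in>nbhd n \<delta>. A1 n x i < 0 \<or> A1 n x k < 0"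
    unfolding eventually_at_right_field by auto
  have "separates_nonadjacent n (b / 2)"
    using b[of "b / 2"] \<open>b > 0\<close> unfolding separates_nonadjacent_def P_def by fastforce
  then show ?thesis using \<open>b > 0\<close> by (intro exI[of _ "b / 2"]) auto
qed

section \<open>The sublevel set near the polygon\<close>

definition polygon :: "nat \<Rightarrow> (real^2) set" where
  "polygon n = {x. \<forall>j\<in>{1..2*n+2}. A1 n x j \<le> 0}"

definition wedge :: "nat \<Rightarrow> real \<Rightarrow> nat \<Rightarrow> (real^2) set" where
  "wedge n \<delta> j = {x \<in> nbhd n \<delta>. 0 < A1 n x j \<and> A1 n x (cyc_prev n j) \<le> A1 n x j
      \<and> A1 n x (cyc_next n j) \<le> A1 n x j}"

definition facet_normal :: "nat \<Rightarrow> nat \<Rightarrow> real^2" where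
  "facet_normal n j = vector [sin (facet_angle n j), cos (facet_angle n j)]"

lemma A1_inner: "A1 n x j = facet_normal n j \<bullet> x - 1"
  by (simp add: A1_dir_form dir_form_def facet_normal_def inner_vec_def sum_2)

lemma A1_scaleR: "A1 n (t *\<^sub>R x) j = t * (A1 n x j + 1) - 1"
  by (simp add: A1_inner)

lemma A1_scaleR_le:
  assumes "0 \<le> t" "t \<le> 1"
  shows "A1 n (t *\<^sub>R x) j \<le> max (A1 n x j) (-1)"
proof (cases "A1 n x j + 1 \<ge> 0")
  case True
  then have "t * (A1 n x j + 1) \<le> A1 n x j + 1" using assms by (simp add: mult_left_le_one_le)
  then show ?thesis by (simp add: A1_scaleR)
next
  case False
  then have "t * (A1 n x j + 1) \<le> 0" using assms by (simp add: mult_nonneg_nonpos)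
  then show ?thesis by (simp add: A1_scaleR)
qed

lemma nbhd_scaleR:
  assumes "\<delta> > 0" "x \<in> nbhd n \<delta>" "0 \<le> t" "t \<le> 1"
  shows "t *\<^sub>R x \<in> nbhd n \<delta>"
  unfolding nbhd_def
proof (intro CollectI ballI)
  fix i assume "i \<in> {1..2*n+2}"
  then have "A1 n x i < \<delta>" using assms(2) by (simp add: nbhd_def)
  then show "A1 n (t *\<^sub>R x) i < \<delta>" using A1_scaleR_le[OF assms(3,4), of n x i] assms(1) by linarith
qed

lemma polygon_scaleR:
  assumes "x \<in> polygon n" "0 \<le> t" "t \<le> 1"
  shows "t *\<^sub>R x \<in> polygon n"
  unfolding polygon_def
proof (intro CollectI ballI)
  fix i assume "i \<in> {1..2*n+2}"
  then have "A1 n x i \<le> 0" using assms(1) by (simp add: polygon_def)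
  then show "A1 n (t *\<^sub>R x) i \<le> 0" using A1_scaleR_le[OF assms(2,3), of n x i] by linarith
qed

lemma continuous_on_A1 [continuous_intros]: "continuous_on S (\<lambda>x. A1 n x j)"
  unfolding A1_def by (intro continuous_intros)

lemma nbhd_eq_Inter: "nbhd n \<delta> = (\<Inter>j\<in>{1..2*n+2}. {x. A1 n x j < \<delta>})"
  by (auto simp: nbhd_def)

lemma polygon_eq_Inter: "polygon n = (\<Inter>j\<in>{1..2*n+2}. {x. A1 n x j \<le> 0})"
  by (auto simp: polygon_def)

lemma open_nbhd: "open (nbhd n \<delta>)"
  unfolding nbhd_eq_Inter
  by (intro open_INT finite_atLeastAtMost ballI open_Collect_less continuous_intros)

lemma closed_polygon: "closed (polygon n)"
  unfolding polygon_eq_Inter by (intro closed_INT ballI closed_Collect_le continuous_intros)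

lemma convex_A1_halfspaces:
  "convex {x. A1 n x j < c}" "convex {x. A1 n x j \<le> c}" "convex {x. c < A1 n x j}"
  "convex {x. A1 n x i \<le> A1 n x j}"
  using convex_halfspace_lt[of "facet_normal n j" "c + 1"] convex_halfspace_le[of "facet_normal n j" "c + 1"]
    convex_halfspace_gt[of "c + 1" "facet_normal n j"]
    convex_halfspace_le[of "facet_normal n i - facet_normal n j" 0]
  by (simp_all add: A1_inner inner_diff_left algebra_simps)

lemma convex_polygon: "convex (polygon n)"
  unfolding polygon_eq_Inter by (intro convex_INT convex_A1_halfspaces)

lemma convex_wedge: "convex (wedge n \<delta> j)"
proof -
  have "wedge n \<delta> j = nbhd n \<delta> \<inter> {x. 0 < A1 n x j} \<inter> {x. A1 n x (cyc_prev n j) \<le> A1 n x j}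
      \<inter> {x. A1 n x (cyc_next n j) \<le> A1 n x j}"
    by (auto simp: wedge_def)
  then show ?thesis
    unfolding nbhd_eq_Inter by (simp add: convex_Int convex_INT convex_A1_halfspaces)
qed

lemma polygon_subset_nbhd: "\<delta> > 0 \<Longrightarrow> polygon n \<subseteq> nbhd n \<delta>"
  by (force simp: polygon_def nbhd_def)

lemma zero_in_polygon: "0 \<in> polygon n"
  by (simp add: polygon_def A1_def)

lemma Fnet_polygon: "x \<in> polygon n \<Longrightarrow> Fnet n x = 0"
  unfolding Fnet_def polygon_def by (intro sum.neutral) (auto simp: relu_def)

lemma Fnet_nonpos_if_even_nonpos:
  assumes "\<And>i. i \<in> {1..2*n+2} \<Longrightarrow> even i \<Longrightarrow> A1 n x i \<le> 0"
  shows "Fnet n x \<le> 0"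
  unfolding Fnet_def
proof (intro sum_nonpos)
  fix i assume "i \<in> {1..2*n+2}"
  then show "(-1)^i * relu (A1 n x i) \<le> 0"
    using assms[of i] by (cases "even i") (auto simp: relu_def)
qed

lemma wedge_nonempty:
  assumes "\<delta> > 0"
  shows "wedge n \<delta> j \<noteq> {}"
proof -
  define c where "c = (1 + \<delta> / 2) *\<^sub>R facet_normal n j"
  have A: "A1 n c i = (1 + \<delta> / 2) * cos (facet_angle n i - facet_angle n j) - 1" for i
    by (simp add: c_def A1_inner facet_normal_def inner_vec_def sum_2 cos_diff algebra_simps)
  have cos_le: "(1 + \<delta> / 2) * cos (facet_angle n i - facet_angle n j) \<le> 1 + \<delta> / 2" for i
    using mult_left_mono[OF cos_le_one, of "1 + \<delta> / 2"] assms by simp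
  have le: "A1 n c i \<le> \<delta> / 2" for i using A[of i] cos_le[of i] by linarith
  have "A1 n c j = \<delta> / 2" by (simp add: A)
  moreover have "A1 n c i < \<delta>" for i using le[of i] assms by linarith
  ultimately have "c \<in> wedge n \<delta> j"
    using le[of "cyc_prev n j"] le[of "cyc_next n j"] assms by (simp add: wedge_def nbhd_def)
  then show ?thesis by auto
qed

lemma card_odd_indices: "card {j \<in> {1..2*n+2}. odd j \<and> j \<noteq> 1} = n"
proof -
  have "{j \<in> {1..2*n+2}. odd j \<and> j \<noteq> 1} = (\<lambda>k. 2 * k + 1) ` {1..n}"
    by (auto elim!: oddE simp: image_iff)
  moreover have "inj_on (\<lambda>k::nat. 2 * k + 1) {1..n}" by (auto simp: inj_on_def)
  ultimately show ?thesis by (simp add: card_image)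
qed

context
  fixes n :: nat and \<delta> :: real
  assumes sep: "separates_nonadjacent n \<delta>"
begin

lemma separates_nonadjacentD:
  "x \<in> nbhd n \<delta> \<Longrightarrow> i \<in> {1..2*n+2} \<Longrightarrow> k \<in> {1..2*n+2} \<Longrightarrow> i \<noteq> k \<Longrightarrow> \<not> cyc_adj n i k
    \<Longrightarrow> A1 n x i \<ge> 0 \<Longrightarrow> A1 n x k < 0"
  using sep unfolding separates_nonadjacent_def by force

lemma wedges_disjoint:
  assumes "j \<in> {1..2*n+2}" "odd j" "k \<in> {1..2*n+2}" "odd k" "j \<noteq> k"
  shows "wedge n \<delta> j \<inter> wedge n \<delta> k = {}"
  using separates_nonadjacentD[of _ j k] cyc_adj_parity[of j n k] assms by (force simp: wedge_def)

lemma wedge_if_active: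
  assumes "x \<in> wedge n \<delta> k" "k \<in> {1..2*n+2}" "odd k" "j \<in> {1..2*n+2}" "odd j" "A1 n x j \<ge> 0"
  shows "x \<in> wedge n \<delta> j"
proof -
  have "\<not> cyc_adj n j k" using cyc_adj_parity[of j n k] assms by auto
  then have "k = j" using separates_nonadjacentD[of x j k] assms by (force simp: wedge_def)
  then show ?thesis using assms(1) by simp
qed

context
  assumes pos: "\<delta> > 0"
begin

text \<open>Under scaling towards the origin the facet values keep their order; once the dominating odd
  facet becomes inactive, all even facets are inactive too.\<close>

lemma wedge_scaleR:
  assumes x: "x \<in> wedge n \<delta> j" and j: "j \<in> {1..2*n+2}" "odd j" and t: "0 \<le> t" "t \<le> 1"
  shows "t *\<^sub>R x \<in> wedge n \<delta> j \<or> (\<forall>i\<in>{1..2*n+2}. even i \<longrightarrow> A1 n (t *\<^sub>R x) i \<le> 0)"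
proof (cases "A1 n (t *\<^sub>R x) j > 0")
  case True
  have "A1 n (t *\<^sub>R x) i \<le> A1 n (t *\<^sub>R x) j" if "A1 n x i \<le> A1 n x j" for i
    using that t by (simp add: A1_scaleR mult_left_mono)
  moreover have "t *\<^sub>R x \<in> nbhd n \<delta>" using nbhd_scaleR[OF pos _ t] x by (simp add: wedge_def)
  ultimately show ?thesis using x True by (simp add: wedge_def)
next
  case False
  have "A1 n (t *\<^sub>R x) i \<le> 0" if i: "i \<in> {1..2*n+2}" "even i" for i
  proof (cases "cyc_adj n j i")
    case True
    then have "A1 n x i \<le> A1 n x j" using x cyc_adj_iff[OF j(1) i(1)] by (auto simp: wedge_def)
    then have "A1 n (t *\<^sub>R x) i \<le> A1 n (t *\<^sub>R x) j" using t by (simp add: A1_scaleR mult_left_mono)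
    then show ?thesis using False by linarith
  next
    case False
    have "x \<in> nbhd n \<delta>" "A1 n x j \<ge> 0" using x by (auto simp: wedge_def)
    then have "A1 n x i < 0" using separates_nonadjacentD[of x j i] i j False by auto
    then show ?thesis using A1_scaleR_le[OF t, of n x i] by linarith
  qed
  then show ?thesis by auto
qed

lemma homology_wedges:
  defines "R \<equiv> \<Union>j\<in>{j\<in>{1..2*n+2}. odd j \<and> j \<noteq> 1}. wedge n \<delta> j"
  shows "homology_group 0 (top_of_set R) \<cong> sum_group {..<n} (\<lambda>_. integer_group)"
    and "p \<noteq> 0 \<Longrightarrow> trivial_group (homology_group p (top_of_set R))"
proof -
  define J where "J = {j\<in>{1..2*n+2}. odd j \<and> j \<noteq> (1::nat)}"
  define \<U> where "\<U> = wedge n \<delta> ` J"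
  have R: "R = \<Union>\<U>" by (simp add: R_def \<U>_def J_def)
  have disj: "wedge n \<delta> j \<inter> wedge n \<delta> k = {}" if "j \<in> J" "k \<in> J" "j \<noteq> k" for j k
    using wedges_disjoint that by (simp add: J_def)
  have "inj_on (wedge n \<delta>) J"
    by (rule inj_onI) (use disj wedge_nonempty[OF pos] in blast)
  moreover have "card J = n" unfolding J_def by (rule card_odd_indices)
  ultimately have card: "card \<U> = n" by (simp add: \<U>_def card_image)
  have piece: "convex S" "S \<noteq> {}" if "S \<in> \<U>" for S
    using that convex_wedge wedge_nonempty[OF pos] by (auto simp: \<U>_def)
  have "openin (top_of_set (\<Union>\<U>)) S" if "S \<in> \<U>" for S
  proof -
    obtain j where j: "j \<in> J" "S = wedge n \<delta> j" using \<open>S \<in> \<U>\<close> by (auto simp: \<U>_def)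
    have "S = \<Union>\<U> \<inter> {x. A1 n x j > 0}"
      using j wedge_if_active[of _ _ j] by (auto simp: \<U>_def J_def wedge_def)
    also have "openin (top_of_set (\<Union>\<U>)) \<dots>"
      by (rule openin_open_Int) (intro open_Collect_less continuous_intros)
    finally show ?thesis .
  qed
  moreover have "pairwise disjnt \<U>"
    unfolding \<U>_def pairwise_def disjnt_def using disj by blast
  ultimately have sum: "homology_group q (top_of_set R) \<cong> sum_group \<U> (\<lambda>S. homology_group q (top_of_set S))"
    for q unfolding R by (intro homology_disjoint_open_Union)
  have "homology_group 0 (top_of_set R) \<cong> sum_group \<U> (\<lambda>_. integer_group)"
    using sum[of 0] by (rule iso_trans) (intro iso_sum_groupI homology_group_convex piece; simp)
  also have "\<dots> \<cong> sum_group {..<n} (\<lambda>_. integer_group)"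
    using sum_integer_group_card[of \<U>] card by (simp add: \<U>_def J_def)
  finally show "homology_group 0 (top_of_set R) \<cong> sum_group {..<n} (\<lambda>_. integer_group)" .
  assume "p \<noteq> 0"
  then have "trivial_group (sum_group \<U> (\<lambda>S. homology_group p (top_of_set S)))"
    using homology_group_convex(2)[OF piece] by (intro trivial_sum_group) auto
  then show "trivial_group (homology_group p (top_of_set R))"
    using isomorphic_group_triviality[OF sum[of p]] by simp
qed

end

context
  assumes n: "n \<ge> 1"
begin

lemma Fnet_near_facet:
  assumes x: "x \<in> nbhd n \<delta>" and j: "j \<in> {1..2*n+2}" and pos: "A1 n x j > 0"
  shows "Fnet n x = (-1)^j * (A1 n x j - relu (A1 n x (cyc_prev n j)) - relu (A1 n x (cyc_next n j)))"
proof -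
  define p q where "p = cyc_prev n j" and "q = cyc_next n j"
  have pq: "p \<in> {1..2*n+2}" "q \<in> {1..2*n+2}"
    using cyc_prev_in[OF j] cyc_next_in[OF j] by (simp_all add: p_def q_def)
  have distinct: "j \<noteq> q" "j \<noteq> p" "q \<noteq> p"
    using cyc_neighbours_distinct[OF n j] by (auto simp: p_def q_def)
  have "(-1)^i * relu (A1 n x i) = 0" if "i \<in> {1..2*n+2} - {j, p, q}" for i
    using separates_nonadjacentD[OF x j, of i] that pos cyc_adj_iff[OF j, of i]
    by (auto simp: relu_def p_def q_def)
  then have "Fnet n x = (\<Sum>i\<in>{j, p, q}. (-1)^i * relu (A1 n x i))"
    unfolding Fnet_def using j pq by (intro sum.mono_neutral_right) auto
  also have "\<dots> = (-1)^j * relu (A1 n x j) + (-1)^p * relu (A1 n x p) + (-1)^q * relu (A1 n x q)"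
    using distinct by (simp add: algebra_simps)
  finally have F: "Fnet n x = \<dots>" .
  have "((-1::real) ^ p) = - ((-1::real) ^ j)" "((-1::real) ^ q) = - ((-1::real) ^ j)"
    using odd_cyc_neighbours[OF j] by (auto simp: p_def q_def minus_one_power_iff)
  then show ?thesis using F pos by (simp add: relu_def p_def q_def algebra_simps)
qed

lemma wedge_eq_sublevel:
  assumes j: "j \<in> {1..2*n+2}" "odd j"
  shows "wedge n \<delta> j = {x \<in> nbhd n \<delta>. Fnet n x \<le> 0 \<and> A1 n x j > 0}"
proof -
  have "Fnet n x \<le> 0 \<longleftrightarrow> A1 n x (cyc_prev n j) \<le> A1 n x j \<and> A1 n x (cyc_next n j) \<le> A1 n x j"
    if x: "x \<in> nbhd n \<delta>" and pos: "A1 n x j > 0" for x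
  proof -
    have "A1 n x (cyc_next n j) < 0 \<or> A1 n x (cyc_prev n j) < 0"
      using separates_nonadjacentD[OF x cyc_next_in[OF j(1)] cyc_prev_in[OF j(1)]]
        cyc_neighbours_distinct[OF n j(1)] by linarith
    then show ?thesis using Fnet_near_facet[OF x j(1) pos] j(2) pos by (auto simp: relu_def)
  qed
  then show ?thesis by (auto simp: wedge_def)
qed

lemma outside_polygon_odd_active:
  assumes x: "x \<in> nbhd n \<delta>" "x \<notin> polygon n" and "Fnet n x \<le> 0"
  obtains j where "j \<in> {1..2*n+2}" "odd j" "A1 n x j > 0"
proof -
  obtain i where i: "i \<in> {1..2*n+2}" "A1 n x i > 0" using x by (force simp: polygon_def)
  show thesis
  proof (cases "odd i")
    case False
    then have "A1 n x (cyc_prev n i) > 0 \<or> A1 n x (cyc_next n i) > 0"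
      using Fnet_near_facet[OF x(1) i] \<open>Fnet n x \<le> 0\<close> i(2) by (auto simp: relu_def)
    then show thesis
      using that cyc_prev_in[OF i(1)] cyc_next_in[OF i(1)] odd_cyc_neighbours[OF i(1)] False by blast
  qed (use that i in blast)
qed

lemma sublevel_minus_polygon:
  "{x \<in> nbhd n \<delta>. Fnet n x \<le> 0} - polygon n = (\<Union>j\<in>{j\<in>{1..2*n+2}. odd j}. wedge n \<delta> j)"
proof -
  have "wedge n \<delta> j \<inter> polygon n = {}" if "j \<in> {1..2*n+2}" for j
    using that by (force simp: wedge_def polygon_def)
  moreover have "\<exists>j\<in>{1..2*n+2}. odd j \<and> x \<in> wedge n \<delta> j"
    if "x \<in> nbhd n \<delta>" "Fnet n x \<le> 0" "x \<notin> polygon n" for x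
    using outside_polygon_odd_active[OF that(1,3,2)] wedge_eq_sublevel that by blast
  ultimately show ?thesis
    using wedge_eq_sublevel by blast
qed

context
  assumes pos: "\<delta> > 0"
begin

lemma sublevel_nbhd_scaleR:
  assumes x: "x \<in> nbhd n \<delta>" "Fnet n x \<le> 0" and t: "0 \<le> t" "t \<le> 1"
  shows "t *\<^sub>R x \<in> nbhd n \<delta>" "Fnet n (t *\<^sub>R x) \<le> 0"
proof -
  show "t *\<^sub>R x \<in> nbhd n \<delta>" by (rule nbhd_scaleR[OF pos x(1) t])
  show "Fnet n (t *\<^sub>R x) \<le> 0"
  proof (cases "x \<in> polygon n")
    case True
    then show ?thesis using polygon_scaleR[OF _ t] Fnet_polygon by auto
  next
    case False
    then obtain j where j: "j \<in> {1..2*n+2}" "odd j" "A1 n x j > 0"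
      using outside_polygon_odd_active[OF x(1) _ x(2)] by blast
    then have "x \<in> wedge n \<delta> j" using wedge_eq_sublevel[OF j(1,2)] x by auto
    from wedge_scaleR[OF pos this j(1,2) t] show ?thesis
    proof
      assume "t *\<^sub>R x \<in> wedge n \<delta> j"
      then show ?thesis using wedge_eq_sublevel[OF j(1,2)] by auto
    next
      assume "\<forall>i\<in>{1..2*n+2}. even i \<longrightarrow> A1 n (t *\<^sub>R x) i \<le> 0"
      then show ?thesis by (intro Fnet_nonpos_if_even_nonpos) auto
    qed
  qed
qed

lemma starlike_sublevel_nbhd: "starlike {x \<in> nbhd n \<delta>. Fnet n x \<le> 0}"
  unfolding starlike_def
proof (intro bexI ballI subsetI)
  show "0 \<in> {x \<in> nbhd n \<delta>. Fnet n x \<le> 0}"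
    using zero_in_polygon polygon_subset_nbhd[OF pos] Fnet_polygon by fastforce
  fix x y assume "x \<in> {x \<in> nbhd n \<delta>. Fnet n x \<le> 0}" "y \<in> closed_segment 0 x"
  then show "y \<in> {x \<in> nbhd n \<delta>. Fnet n x \<le> 0}"
    using sublevel_nbhd_scaleR by (auto simp: closed_segment_def)
qed

lemma relative_homology_sublevel_wedges:
  defines "S \<equiv> {x. Fnet n x \<le> 0}"
  shows "relative_homology_group p (top_of_set S) (S - polygon n)
    \<cong> homology_group (p - 1) (top_of_set (\<Union>j\<in>{j\<in>{1..2*n+2}. odd j \<and> j \<noteq> 1}. wedge n \<delta> j))"
proof -
  define N where "N = {x \<in> nbhd n \<delta>. Fnet n x \<le> 0}"
  define Q where "Q = wedge n \<delta> 1"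
  have N: "N = S \<inter> nbhd n \<delta>" by (auto simp: N_def S_def)
  have NK: "N - polygon n = (\<Union>j\<in>{j\<in>{1..2*n+2}. odd j}. wedge n \<delta> j)"
    using sublevel_minus_polygon by (simp add: N_def)
  have Q_active: "Q = (N - polygon n) \<inter> {x. A1 n x 1 > 0}" "Q = (N - polygon n) \<inter> {x. A1 n x 1 \<ge> 0}"
    unfolding NK Q_def using wedge_if_active[of _ _ 1] by (auto simp: wedge_def)
  have "relative_homology_group p (top_of_set S) (S - polygon n)
      \<cong> relative_homology_group p (top_of_set N) (N - polygon n)"
    unfolding N
    by (rule group.iso_sym[OF _ relative_homology_excision_nbhd])
      (simp_all add: closed_polygon open_nbhd polygon_subset_nbhd pos)
  also have "\<dots> \<cong> homology_group (p - 1) (top_of_set ((N - polygon n) - Q))"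
  proof (rule relative_homology_contractible_clopen)
    show "contractible N" using starlike_sublevel_nbhd by (simp add: N_def starlike_imp_contractible)
    show "contractible Q" by (simp add: Q_def convex_imp_contractible convex_wedge)
    show "Q \<noteq> {}" by (simp add: Q_def wedge_nonempty pos)
    show "openin (top_of_set (N - polygon n)) Q"
      by (subst Q_active(1), rule openin_open_Int) (intro open_Collect_less continuous_intros)
    show "closedin (top_of_set (N - polygon n)) Q"
      by (subst Q_active(2), rule closedin_closed_Int) (intro closed_Collect_le continuous_intros)
  qed auto
  also have "(N - polygon n) - Q = (\<Union>j\<in>{j\<in>{1..2*n+2}. odd j \<and> j \<noteq> 1}. wedge n \<delta> j)"
    unfolding NK Q_def using wedges_disjoint[of _ 1] by fastforce
  finally show ?thesis .
qed

end

end

end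

theorem relative_homology_sublevel_polygon:
  assumes "n \<ge> 1"
  defines "S \<equiv> {x. Fnet n x \<le> 0}"
  shows "relative_homology_group 1 (top_of_set S) (S - polygon n) \<cong> sum_group {..<n} (\<lambda>_. integer_group)"
    and "p \<noteq> 1 \<Longrightarrow> trivial_group (relative_homology_group p (top_of_set S) (S - polygon n))"
proof -
  obtain \<delta> where sep: "separates_nonadjacent n \<delta>" and "\<delta> > 0"
    using separates_nonadjacent_exists by blast
  define R where "R = (\<Union>j\<in>{j\<in>{1..2*n+2}. odd j \<and> j \<noteq> 1}. wedge n \<delta> j)"
  have shift: "relative_homology_group p (top_of_set S) (S - polygon n) \<cong> homology_group (p - 1) (top_of_set R)"
    for p using relative_homology_sublevel_wedges[OF sep assms(1) \<open>\<delta> > 0\<close>] by (simp add: S_def R_def)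
  show "relative_homology_group 1 (top_of_set S) (S - polygon n) \<cong> sum_group {..<n} (\<lambda>_. integer_group)"
    using shift[of 1] homology_wedges(1)[OF sep \<open>\<delta> > 0\<close>]
    by (simp add: R_def iso_trans)
  assume "p \<noteq> 1"
  then show "trivial_group (relative_homology_group p (top_of_set S) (S - polygon n))"
    using isomorphic_group_triviality[OF shift[of p]] homology_wedges(2)[OF sep \<open>\<delta> > 0\<close>, of "p - 1"]
    by (simp add: R_def)
qed

section \<open>Cells of the arrangement\<close>

lemma component_if_isolated:
  fixes K S V :: "'a::topological_space set"
  assumes "connected K" "K \<noteq> {}" "K \<subseteq> S" "closed K" "open V" "K \<subseteq> V" "S \<inter> V \<subseteq> K"
  shows "K \<in> components S"
proof -
  obtain C where C: "C \<in> components S" "K \<subseteq> C"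
    using exists_component_superset[OF assms(3)] assms(1-3) by blast
  have "V \<inter> C = {} \<or> - K \<inter> C = {}"
    using in_components_connected[OF C(1)] in_components_subset[OF C(1)] assms
    by (intro connectedD) (auto simp: open_Compl)
  then have "C = K" using C assms(2,6) by blast
  then show ?thesis using C(1) by simp
qed

lemma closure_nbhd_zero: "closure (nbhd n 0) = polygon n"
proof
  show "closure (nbhd n 0) \<subseteq> polygon n"
    by (rule closure_minimal[OF _ closed_polygon]) (auto simp: polygon_def nbhd_def)
  show "polygon n \<subseteq> closure (nbhd n 0)"
  proof
    fix x assume x: "x \<in> polygon n"
    have "open_segment 0 x \<subseteq> nbhd n 0"
    proof
      fix y assume "y \<in> open_segment 0 x"
      then obtain u where u: "0 < u" "u < 1" "y = u *\<^sub>R x" by (auto simp: in_segment)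
      have "A1 n y j < 0" if "j \<in> {1..2*n+2}" for j
      proof -
        have "A1 n x j + 1 \<le> 1" using x that by (simp add: polygon_def)
        then have "u * (A1 n x j + 1) \<le> u" using mult_left_mono[of _ 1 u] u(1) by fastforce
        then have "u * (A1 n x j + 1) < 1" using u(2) by linarith
        then show ?thesis by (simp add: u(3) A1_scaleR)
      qed
      then show "y \<in> nbhd n 0" by (simp add: nbhd_def)
    qed
    then have "closure (open_segment 0 x) \<subseteq> closure (nbhd n 0)"
      by (rule closure_mono)
    moreover have "0 \<in> closure (nbhd n 0)"
      by (intro closure_subset[THEN subsetD]) (simp add: nbhd_def A1_def)
    ultimately show "x \<in> closure (nbhd n 0)"
      by (cases "x = 0") auto
  qed
qed

lemma polygon_in_cells: "polygon n \<in> cells n"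
proof -
  have "sign_region n (\<lambda>_. -1) = nbhd n 0"
    by (auto simp: sign_region_def nbhd_def sgn_1_neg)
  moreover have "0 \<in> nbhd n 0" by (simp add: nbhd_def A1_def)
  ultimately show ?thesis
    unfolding cells_def using closure_nbhd_zero[of n] by (intro CollectI exI[of _ "\<lambda>_. -1"]) auto
qed

lemma aff_dim_polygon: "aff_dim (polygon n) = 2"
proof -
  have "nbhd n 0 \<subseteq> interior (polygon n)"
    using closure_nbhd_zero[of n] closure_subset open_nbhd by (intro interior_maximal) auto
  moreover have "0 \<in> nbhd n 0" by (simp add: nbhd_def A1_def)
  ultimately have "interior (polygon n) \<noteq> {}" by blast
  then show ?thesis by (simp add: aff_dim_nonempty_interior)
qed

lemma closure_sign_region_nonneg:
  assumes "z \<in> closure (sign_region n s)" "i \<in> {1..2*n+2}" "s i \<noteq> -1"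
  shows "A1 n z i \<ge> 0"
proof -
  have "sign_region n s \<subseteq> {z. A1 n z i \<ge> 0}"
  proof
    fix z assume "z \<in> sign_region n s"
    then have "sgn (A1 n z i) \<noteq> -1" using assms(2,3) by (simp add: sign_region_def)
    then show "z \<in> {z. A1 n z i \<ge> 0}" by (metis mem_Collect_eq not_le sgn_neg)
  qed
  moreover have "closed {z. A1 n z i \<ge> 0}" by (intro closed_Collect_le continuous_intros)
  ultimately show ?thesis using closure_minimal assms(1) by blast
qed

lemma closure_sign_region_nonpos:
  assumes "z \<in> closure (sign_region n s)" "i \<in> {1..2*n+2}" "s i \<noteq> 1"
  shows "A1 n z i \<le> 0"
proof -
  have "sign_region n s \<subseteq> {z. A1 n z i \<le> 0}"
  proof
    fix z assume "z \<in> sign_region n s"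
    then have "sgn (A1 n z i) \<noteq> 1" using assms(2,3) by (simp add: sign_region_def)
    then show "z \<in> {z. A1 n z i \<le> 0}" by (metis mem_Collect_eq not_le sgn_pos)
  qed
  moreover have "closed {z. A1 n z i \<le> 0}" by (intro closed_Collect_le continuous_intros)
  ultimately show ?thesis using closure_minimal assms(1) by blast
qed

lemma A1_add_scaleR: "A1 n (y + t *\<^sub>R w) i = A1 n y i + t * dir_form (facet_angle n i) w"
  by (simp add: A1_dir_form dir_form_def algebra_simps)

lemma Fnet_sign_region:
  assumes "z \<in> sign_region n s"
  shows "Fnet n z = (\<Sum>i\<in>{1..2*n+2}. (-1)^i * (if s i = 1 then A1 n z i else 0))"
  unfolding Fnet_def
proof (intro sum.cong refl)
  fix i assume "i \<in> {1..2*n+2}"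
  then have "sgn (A1 n z i) = s i" using assms by (simp add: sign_region_def)
  then show "(-1)^i * relu (A1 n z i) = (-1)^i * (if s i = 1 then A1 n z i else 0)"
    by (auto simp: relu_def sgn_if split: if_splits)
qed

lemma Fnet_sign_region_translate:
  assumes y: "y \<in> sign_region n s" and y': "y + t *\<^sub>R w \<in> sign_region n s"
  shows "Fnet n (y + t *\<^sub>R w)
    = Fnet n y + t * (\<Sum>i\<in>{1..2*n+2}. (-1)^i * (if s i = 1 then dir_form (facet_angle n i) w else 0))"
proof -
  have "Fnet n (y + t *\<^sub>R w) = (\<Sum>i\<in>{1..2*n+2}. (-1)^i * (if s i = 1 then A1 n y i else 0)
      + t * ((-1)^i * (if s i = 1 then dir_form (facet_angle n i) w else 0)))"
    unfolding Fnet_sign_region[OF y'] by (intro sum.cong) (auto simp: A1_add_scaleR algebra_simps)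
  also have "\<dots> = Fnet n y + t * (\<Sum>i\<in>{1..2*n+2}. (-1)^i * (if s i = 1 then dir_form (facet_angle n i) w else 0))"
    by (simp only: sum.distrib sum_distrib_left Fnet_sign_region[OF y])
  finally show ?thesis .
qed

lemma sign_region_translate:
  assumes y: "y \<in> sign_region n s"
    and w: "\<And>i. i \<in> {1..2*n+2} \<Longrightarrow> s i = 0 \<Longrightarrow> dir_form (facet_angle n i) w = 0"
  obtains t where "t > 0" "y + t *\<^sub>R w \<in> sign_region n s"
proof -
  have "\<forall>\<^sub>F t in at_right 0. sgn (A1 n (y + t *\<^sub>R w) i) = s i" if i: "i \<in> {1..2*n+2}" for i
  proof (cases "s i = 0")
    case True
    then show ?thesis using w[OF i] y i by (simp add: A1_add_scaleR sign_region_def)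
  next
    case False
    have "sgn (A1 n y i) = s i" using y i by (simp add: sign_region_def)
    then have "A1 n y i \<noteq> 0" using False by auto
    have lim: "((\<lambda>t. A1 n y i + t * dir_form (facet_angle n i) w) \<longlongrightarrow> A1 n y i) (at_right 0)"
      by (auto intro!: tendsto_eq_intros)
    have "\<forall>\<^sub>F t in at_right 0. sgn (A1 n y i + t * dir_form (facet_angle n i) w) = sgn (A1 n y i)"
    proof (cases "A1 n y i > 0")
      case True
      then show ?thesis using order_tendstoD(1)[OF lim, of 0] by (auto elim!: eventually_mono)
    next
      case False
      then have "A1 n y i < 0" using \<open>A1 n y i \<noteq> 0\<close> by linarith
      then show ?thesis using order_tendstoD(2)[OF lim, of 0] by (auto elim!: eventually_mono)
    qed
    then show ?thesis using y i by (simp add: A1_add_scaleR sign_region_def)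
  qed
  then have "\<forall>\<^sub>F t in at_right 0. y + t *\<^sub>R w \<in> sign_region n s"
    unfolding sign_region_def mem_Collect_eq by (intro eventually_ball_finite) auto
  then obtain b where "b > 0" "\<And>t. 0 < t \<Longrightarrow> t < b \<Longrightarrow> y + t *\<^sub>R w \<in> sign_region n s"
    unfolding eventually_at_right_field by auto
  then show thesis using that[of "b / 2"] by simp
qed

definition facet_tangent :: "nat \<Rightarrow> nat \<Rightarrow> real^2" where
  "facet_tangent n k = vector [cos (facet_angle n k), - sin (facet_angle n k)]"

lemma dir_form_facet_tangent: "dir_form \<phi> (facet_tangent n k) = sin (\<phi> - facet_angle n k)"
  by (simp add: dir_form_def facet_tangent_def sin_diff algebra_simps)

lemma sin_facet_angle_cyc_next: "sin (facet_angle n (cyc_next n a) - facet_angle n a) = sin (pi / real (n + 1))"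
proof -
  have step: "facet_angle n (b + 1) - facet_angle n b = pi / real (n + 1)" for b
  proof -
    have "facet_angle n (b + 1) - facet_angle n b = (pi * real (b + 1) - pi * real b) / real (n + 1)"
      unfolding facet_angle_def by (rule diff_divide_distrib[symmetric])
    also have "\<dots> = pi / real (n + 1)" by (simp add: algebra_simps)
    finally show ?thesis .
  qed
  show ?thesis
  proof (cases "a = 2 * n + 2")
    case True
    have "facet_angle n a = pi * (2 * real (n + 1)) / real (n + 1)"
      using True by (simp add: facet_angle_def)
    also have "\<dots> = 2 * pi" by (simp del: of_nat_Suc)
    finally have "facet_angle n a = 2 * pi" .
    then have "facet_angle n (cyc_next n a) - facet_angle n a = pi / real (n + 1) - 2 * pi"
      using True by (simp add: cyc_next_def facet_angle_def)
    then show ?thesis by (simp add: sin_diff)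
  next
    case False
    then show ?thesis using step[of a] by (simp add: cyc_next_def)
  qed
qed

lemma dir_form_adjacent_tangent:
  assumes "n \<ge> 1" "cyc_adj n i k"
  shows "dir_form (facet_angle n i) (facet_tangent n k) \<noteq> 0"
proof -
  have nz: "sin (pi / real (n + 1)) \<noteq> 0"
    using assms(1) by (intro sin_gt_zero[THEN less_imp_neq, symmetric]) (auto simp: field_simps)
  from assms(2) consider "k = cyc_next n i" | "i = cyc_next n k" by (auto simp: cyc_adj_def)
  then show ?thesis
  proof cases
    case 1
    have "sin (facet_angle n i - facet_angle n k) = - sin (facet_angle n k - facet_angle n i)"
      by (metis minus_diff_eq sin_minus)
    then show ?thesis using nz sin_facet_angle_cyc_next[of n i] 1 by (simp add: dir_form_facet_tangent)
  next
    case 2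
    then show ?thesis using nz sin_facet_angle_cyc_next[of n k] by (simp add: dir_form_facet_tangent)
  qed
qed

context
  fixes n :: nat and \<delta> :: real
  assumes sep: "separates_nonadjacent n \<delta>" and n: "n \<ge> 1"
begin

lemma sign_pattern_near_polygon:
  assumes x: "x \<in> nbhd n \<delta>" "x \<notin> polygon n" "x \<in> closure (sign_region n s)"
  obtains j j' where "j \<in> {1..2*n+2}" "s j = 1" "cyc_adj n j j'"
    "\<forall>i\<in>{1..2*n+2}. s i \<noteq> -1 \<longrightarrow> i = j \<or> i = j'"
proof -
  obtain j where j: "j \<in> {1..2*n+2}" "A1 n x j > 0" using x(2) by (force simp: polygon_def)
  have "s j = 1"
  proof (rule ccontr)
    assume "s j \<noteq> 1"
    then show False using closure_sign_region_nonpos[OF x(3) j(1)] j(2) by linarith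
  qed
  have adj: "cyc_adj n j i" if i: "i \<in> {1..2*n+2}" "s i \<noteq> -1" "i \<noteq> j" for i
  proof (rule ccontr)
    assume "\<not> cyc_adj n j i"
    then have "A1 n x i < 0" using separates_nonadjacentD[OF sep x(1) j(1) i(1)] j(2) i(3) by simp
    then show False using closure_sign_region_nonneg[OF x(3) i(1,2)] by linarith
  qed
  let ?p = "cyc_prev n j" and ?q = "cyc_next n j"
  have pq: "?p \<in> {1..2*n+2}" "?q \<in> {1..2*n+2}" using cyc_prev_in[OF j(1)] cyc_next_in[OF j(1)] .
  have not_both: "s ?p = -1 \<or> s ?q = -1"
  proof (rule ccontr)
    assume "\<not> (s ?p = -1 \<or> s ?q = -1)"
    then have "A1 n x ?q \<ge> 0" "A1 n x ?p \<ge> 0" using closure_sign_region_nonneg[OF x(3)] pq by auto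
    then show False using separates_nonadjacentD[OF sep x(1) pq(2) pq(1)] cyc_neighbours_distinct[OF n j(1)]
      by simp
  qed
  define j' where "j' = (if s ?p \<noteq> -1 then ?p else ?q)"
  show thesis
  proof (rule that[OF j(1) \<open>s j = 1\<close>])
    show "cyc_adj n j j'" using cyc_adj_iff[OF j(1)] pq by (simp add: j'_def)
    show "\<forall>i\<in>{1..2*n+2}. s i \<noteq> -1 \<longrightarrow> i = j \<or> i = j'"
      using adj cyc_adj_iff[OF j(1)] not_both by (fastforce simp: j'_def)
  qed
qed

text \<open>On a cell meeting the outside of the polygon near it, \<open>F\<close> is affine, and it is not constant
  along the line of the second active facet.\<close>

lemma flat_cell_near_polygon:
  assumes "flat_cell n C"
  shows "C \<inter> nbhd n \<delta> \<subseteq> polygon n"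
proof (rule ccontr)
  assume "\<not> C \<inter> nbhd n \<delta> \<subseteq> polygon n"
  then obtain x where x: "x \<in> C" "x \<in> nbhd n \<delta>" "x \<notin> polygon n" by blast
  obtain s where C: "C = closure (sign_region n s)" and "sign_region n s \<noteq> {}"
    using assms by (auto simp: flat_cell_def cells_def)
  then obtain y where y: "y \<in> sign_region n s" by blast
  obtain c where c: "\<And>z. z \<in> C \<Longrightarrow> Fnet n z = c" using assms by (auto simp: flat_cell_def)
  have "x \<in> closure (sign_region n s)" using x(1) C by simp
  then obtain j j' where j: "j \<in> {1..2*n+2}" "s j = 1" "cyc_adj n j j'"
    and active: "\<forall>i\<in>{1..2*n+2}. s i \<noteq> -1 \<longrightarrow> i = j \<or> i = j'"
    by (rule sign_pattern_near_polygon[OF x(2,3)])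
  define w where "w = facet_tangent n j'"
  have w_j': "dir_form (facet_angle n j') w = 0" by (simp add: w_def dir_form_facet_tangent)
  have "dir_form (facet_angle n i) w = 0" if "i \<in> {1..2*n+2}" "s i = 0" for i
  proof -
    have "i = j \<or> i = j'" using active that by simp
    then show ?thesis using that(2) j(2) w_j' by auto
  qed
  then obtain t where "t > 0" and y': "y + t *\<^sub>R w \<in> sign_region n s"
    by (rule sign_region_translate[OF y])
  have "(\<Sum>i\<in>{1..2*n+2} - {j}. (-1)^i * (if s i = 1 then dir_form (facet_angle n i) w else 0)) = 0"
  proof (intro sum.neutral ballI)
    fix i assume "i \<in> {1..2*n+2} - {j}"
    then have "s i = 1 \<Longrightarrow> i = j'" using active by force
    then show "(-1::real)^i * (if s i = 1 then dir_form (facet_angle n i) w else 0) = 0"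
      using w_j' by auto
  qed
  moreover have "(\<Sum>i\<in>{1..2*n+2}. (-1::real)^i * (if s i = 1 then dir_form (facet_angle n i) w else 0))
      = (-1)^j * (if s j = 1 then dir_form (facet_angle n j) w else 0)
        + (\<Sum>i\<in>{1..2*n+2} - {j}. (-1)^i * (if s i = 1 then dir_form (facet_angle n i) w else 0))"
    using j(1) by (intro sum.remove) auto
  ultimately have "Fnet n (y + t *\<^sub>R w) = Fnet n y + t * ((-1)^j * dir_form (facet_angle n j) w)"
    using Fnet_sign_region_translate[OF y y'] j(2) by simp
  moreover have "Fnet n (y + t *\<^sub>R w) = Fnet n y"
    using c y y' closure_subset C by blast
  ultimately show False
    using \<open>t > 0\<close> dir_form_adjacent_tangent[OF n j(3)] by (simp add: w_def)
qed

end

lemma flat_cell_polygon: "flat_cell n (polygon n)"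
  using polygon_in_cells Fnet_polygon by (auto simp: flat_cell_def)

theorem polygon_in_components:
  assumes "n \<ge> 1"
  shows "polygon n \<in> components (Fnet n -` {0} \<inter> flat_union n)"
proof -
  obtain \<delta> where sep: "separates_nonadjacent n \<delta>" and "\<delta> > 0"
    using separates_nonadjacent_exists by blast
  show ?thesis
  proof (rule component_if_isolated)
    show "connected (polygon n)" by (simp add: convex_connected convex_polygon)
    show "polygon n \<noteq> {}" using zero_in_polygon by blast
    show "polygon n \<subseteq> Fnet n -` {0} \<inter> flat_union n"
      using Fnet_polygon flat_cell_polygon by (auto simp: flat_union_def)
    show "Fnet n -` {0} \<inter> flat_union n \<inter> nbhd n \<delta> \<subseteq> polygon n"
      using flat_cell_near_polygon[OF sep assms] by (auto simp: flat_union_def)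
  qed (simp_all add: closed_polygon open_nbhd polygon_subset_nbhd \<open>\<delta> > 0\<close>)
qed

lemma total_local_H_complexity_polygon:
  assumes "n \<ge> 1"
  shows "total_local_H_complexity (Fnet n) 0 (polygon n) = n"
proof -
  define S where "S = {x. Fnet n x \<le> 0}"
  define r where "r i = group_rank (relative_homology_group i (top_of_set S) (S - polygon n))" for i
  have "r 1 = n"
    using group_rank_iso[OF abelian_relative_homology_group comm_group_sum_integer_group
        relative_homology_sublevel_polygon(1)[OF assms]] group_rank_sum_integer_group
    by (simp add: r_def S_def)
  moreover have "r i = 0" if "i \<noteq> 1" for i
    using group_rank_trivial relative_homology_sublevel_polygon(2)[OF assms that] by (simp add: r_def S_def)
  ultimately have "{i. r i \<noteq> 0} = {1}" using assms by force
  then show ?thesis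
    using \<open>r 1 = n\<close> by (simp add: total_local_H_complexity_def Let_def r_def S_def)
qed

theorem mainTheorem18:
  fixes n :: nat
  assumes "n \<ge> 1"
  defines "K \<equiv> {x :: real^2. \<forall>j\<in>{1..2*n+2}. A1 n x j \<le> 0}"
  defines "Fle \<equiv> {x :: real^2. Fnet n x \<le> 0}"
  shows "K \<in> cells n \<and> flat_cell n K \<and> aff_dim K = 2 \<and> Fnet n ` K = {0}
    \<and> K \<in> components (Fnet n -` {0} \<inter> flat_union n)
    \<and> relative_homology_group 1 (subtopology euclidean Fle) (Fle - K)
        \<cong> sum_group {..<n} (\<lambda>_. integer_group)
    \<and> (\<forall>i. i \<noteq> 1 \<longrightarrow> trivial_group (relative_homology_group i (subtopology euclidean Fle) (Fle - K)))
    \<and> total_local_H_complexity (Fnet n) 0 K = n"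
proof -
  have K: "K = polygon n" by (simp add: K_def polygon_def)
  have "Fnet n ` K = {0}" using Fnet_polygon zero_in_polygon K by force
  then show ?thesis
    unfolding K Fle_def
    using polygon_in_cells flat_cell_polygon aff_dim_polygon polygon_in_components
      relative_homology_sublevel_polygon total_local_H_complexity_polygon assms
    by blast
qed

end
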